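(* Let $q>1$ and $0<u<1$. Put weights on the edges $\lambda\to\Lambda$ of Young's lattice ($\Lambda$ obtained from $\lambda$ by adding one box): $m_{\lambda,\Lambda}=\frac{u}{q^{\lambda'_1}(q^{\lambda'_1+1}-1)}$ if the box is added to column $1$, and $m_{\lambda,\Lambda}=\frac{u\,(q^{-\lambda'_s}-q^{-\lambda'_{s-1}})}{q^{\lambda'_1}-1}$ if it is added to column $s>1$. Then for every standard Young tableau $T$, the probability that the Young Tableau Algorithm (run to termination) outputs $T$ equals $$\prod_{r=1}^\infty(1-u/q^r)\prod_{i=0}^{|T|-1}m_{\gamma_i,\gamma_{i+1}},$$ where $\emptyset=\gamma_0\subset\gamma_1\subset\dots\subset\gamma_{|T|}$ is the chain of shapes with $\gamma_k$ the shape formed by the entries $1,\dots,k$ of $T$.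
   Context: $\lambda'_s$ is the length of column $s$ of $\lambda$ ($0$ if empty). Young Tableau Algorithm: coins indexed by $N\ge1$, coin $N$ showing heads with probability $u/q^N$, all flips independent. Start with $\lambda=\emptyset$, $N=1$. Flip coin $N$. If tails, set $N\to N+1$ and flip the new coin. If heads, choose a column $S\ge1$ with $\Pr(S=1)=\frac{q^{N-\lambda'_1}-1}{q^N-1}$ and $\Pr(S=s)=\frac{q^{N-\lambda'_s}-q^{N-\lambda'_{s-1}}}{q^N-1}$ for $s>1$, add a box at the bottom of column $S$, and flip coin $N$ again. Almost surely only finitely many boxes are added; the output is the standard Young tableau obtained by labelling boxes $1,2,\dots$ in order of creation. *)

theory Defs
  imports "HOL-Probability.Probability"
begin

text \<open>Tableaux/diagrams: a function nat \<times> nat \<Rightarrow> nat on boxes (row, column),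
  rows and columns indexed from 1; value 0 means "no box", otherwise the label.\<close>

type_synonym tab = "nat \<times> nat \<Rightarrow> nat"

definition syt :: "tab \<Rightarrow> nat \<Rightarrow> bool" where
  "syt T n \<longleftrightarrow>
     (\<forall>i j. T (i, j) \<noteq> 0 \<longrightarrow> 1 \<le> i \<and> 1 \<le> j) \<and>
     bij_betw T {b. T b \<noteq> 0} {1..n} \<and>
     (\<forall>i j. T (i, j) \<noteq> 0 \<and> 1 < i \<longrightarrow> T (i - 1, j) \<noteq> 0 \<and> T (i - 1, j) < T (i, j)) \<and>
     (\<forall>i j. T (i, j) \<noteq> 0 \<and> 1 < j \<longrightarrow> T (i, j - 1) \<noteq> 0 \<and> T (i, j - 1) < T (i, j))"

definition clen :: "tab \<Rightarrow> nat \<Rightarrow> nat" where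
  "clen Tab s = card {i. Tab (i, s) \<noteq> 0}"

definition dlen :: "(nat \<times> nat) set \<Rightarrow> nat \<Rightarrow> nat" where
  "dlen A s = card {i. (i, s) \<in> A}"

definition shape :: "tab \<Rightarrow> nat \<Rightarrow> (nat \<times> nat) set" where
  "shape T k = {b. T b \<noteq> 0 \<and> T b \<le> k}"

definition edge_wt :: "real \<Rightarrow> real \<Rightarrow> (nat \<times> nat) set \<Rightarrow> (nat \<times> nat) set \<Rightarrow> real" where
  "edge_wt q u lam Lam =
     (let s = (THE s. 1 \<le> s \<and> dlen Lam s \<noteq> dlen lam s) in
      if s = 1 then u / (q ^ dlen lam 1 * (q ^ (dlen lam 1 + 1) - 1))
      else u * (1 / q ^ dlen lam s - 1 / q ^ dlen lam (s - 1)) / (q ^ dlen lam 1 - 1))"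

text \<open>Column choice probability Pr(S = s) when the current coin is N.\<close>
definition colprob :: "real \<Rightarrow> nat \<Rightarrow> tab \<Rightarrow> nat \<Rightarrow> real" where
  "colprob q N Tab s =
     (if s = 1 then (q ^ N / q ^ clen Tab 1 - 1) / (q ^ N - 1)
      else (q ^ N / q ^ clen Tab s - q ^ N / q ^ clen Tab (s - 1)) / (q ^ N - 1))"

text \<open>State: (current coin N, tableau built so far, number of boxes).
  One step consumes a fresh pair (x, y) of independent uniform [0,1] variables:
  coin N shows heads iff x < u / q^N; on heads, the column S is the s with
  y in the s-th interval of the partition of [0,1] with lengths colprob.\<close>
type_synonym ystate = "nat \<times> tab \<times> nat"

definition ystep :: "real \<Rightarrow> real \<Rightarrow> real \<times> real \<Rightarrow> ystate \<Rightarrow> ystate" where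
  "ystep q u xy st =
     (case st of (N, Tab, c) \<Rightarrow>
       if fst xy < u / q ^ N then
         (let s = (LEAST s. 1 \<le> s \<and> snd xy < (\<Sum>t = 1..s. colprob q N Tab t)) in
          (N, Tab((clen Tab s + 1, s) := c + 1), c + 1))
       else (Suc N, Tab, c))"

primrec yrun :: "real \<Rightarrow> real \<Rightarrow> (nat \<Rightarrow> real \<times> real) \<Rightarrow> nat \<Rightarrow> ystate" where
  "yrun q u \<omega> 0 = (1, (\<lambda>_. 0), 0)"
| "yrun q u \<omega> (Suc k) = ystep q u (\<omega> k) (yrun q u \<omega> k)"

definition coin_space :: "(nat \<Rightarrow> real \<times> real) measure" where
  "coin_space = (\<Pi>\<^sub>M i\<in>(UNIV::nat set).
      uniform_measure lborel {0..1::real} \<Otimes>\<^sub>M uniform_measure lborel {0..1::real})"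

definition outputs :: "real \<Rightarrow> real \<Rightarrow> tab \<Rightarrow> (nat \<Rightarrow> real \<times> real) set" where
  "outputs q u T = {\<omega> \<in> space coin_space. \<exists>K. \<forall>k\<ge>K. fst (snd (yrun q u \<omega> k)) = T}"

end

theory Submission
  imports Defs
begin

text \<open>
  After k flips the algorithm is in a state (N, tableau, c) with N + c = k + 1, and it outputs T
  exactly when it passes through the states (M, T restricted to the entries 1..c, c) and finally
  stays in the states (M + j, T, n) for all j. By induction on k, using that flip k is independent
  of the earlier ones, the probability of being in state (M, T restricted to 1..c, c) at time
  M + c - 1 is the product of three factors: the probabilities 1 - u/q^r of tails for 1 \<le> r < M,
  the edge weights m along the first c steps of the chain of shapes, and the product of the
  1 - q^i/q^M over i < l, where l is the length of the first column of that shape. The state can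
  be entered by a tail of coin M - 1 or by heads of coin M followed by the right column; the
  q-identity behind the last factor makes these two contributions add up. Staying in T forever
  multiplies by the remaining tails probabilities, which converge to the infinite product, and
  letting M tend to infinity turns the last factor into 1.
\<close>

section \<open>Events determined by an initial segment of coordinates\<close>

lemma prefix_event_eq_prod_emb:
  fixes M :: "nat \<Rightarrow> 'a measure"
  assumes nonempty: "\<And>i. space (M i) \<noteq> {}"
    and A: "A \<in> sets (PiM UNIV M)"
    and prefix: "\<And>\<omega> \<omega>'. \<omega> \<in> space (PiM UNIV M) \<Longrightarrow> \<omega>' \<in> space (PiM UNIV M) \<Longrightarrow>
                   (\<forall>j<k. \<omega> j = \<omega>' j) \<Longrightarrow> \<omega> \<in> A \<Longrightarrow> \<omega>' \<in> A"
  obtains A' where "A' \<in> sets (PiM {..<k} M)" and "A = prod_emb UNIV M {..<k} A'"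
proof -
  have "space (PiM UNIV M) \<noteq> {}"
    using nonempty by (simp add: space_PiM_empty_iff)
  then obtain \<omega>\<^sub>0 where \<omega>\<^sub>0: "\<omega>\<^sub>0 \<in> space (PiM UNIV M)"
    by blast
  define extend where "extend x = (\<lambda>j. if j < k then x j else \<omega>\<^sub>0 j)" for x :: "nat \<Rightarrow> 'a"
  have extend: "extend \<in> PiM {..<k} M \<rightarrow>\<^sub>M PiM UNIV M"
  proof (rule measurable_PiM_single')
    show "(\<lambda>x. extend x j) \<in> PiM {..<k} M \<rightarrow>\<^sub>M M j" for j
      using \<omega>\<^sub>0
      by (cases "j < k")
        (auto simp: extend_def space_PiM intro!: measurable_component_singleton measurable_const)
  qed (use \<omega>\<^sub>0 in \<open>auto simp: extend_def space_PiM PiE_iff\<close>)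
  have "\<omega> \<in> A \<longleftrightarrow> restrict \<omega> {..<k} \<in> extend -` A \<inter> space (PiM {..<k} M)"
    if \<omega>: "\<omega> \<in> space (PiM UNIV M)" for \<omega>
  proof -
    have "restrict \<omega> {..<k} \<in> space (PiM {..<k} M)"
      using \<omega> by (auto simp: space_PiM)
    moreover from this have "extend (restrict \<omega> {..<k}) \<in> space (PiM UNIV M)"
      using measurable_space[OF extend] by blast
    ultimately show ?thesis
      using prefix[of \<omega> "extend (restrict \<omega> {..<k})"] prefix[of "extend (restrict \<omega> {..<k})" \<omega>] \<omega>
      by (auto simp: extend_def)
  qed
  then have "A = prod_emb UNIV M {..<k} (extend -` A \<inter> space (PiM {..<k} M))"
    using sets.sets_into_space[OF A] by (auto simp: prod_emb_def space_PiM[symmetric])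
  moreover have "extend -` A \<inter> space (PiM {..<k} M) \<in> sets (PiM {..<k} M)"
    using extend A by (rule measurable_sets)
  ultimately show ?thesis
    using that by blast
qed

lemma emeasure_prod_emb_Int_coordinate:
  fixes M :: "nat \<Rightarrow> 'a measure"
  assumes prob_spaces: "\<And>i. prob_space (M i)"
    and A: "A \<in> sets (PiM {..<k} M)" and B: "B \<in> sets (M k)"
  shows "emeasure (PiM UNIV M) (prod_emb UNIV M {..<k} A \<inter> {\<omega>. \<omega> k \<in> B}) =
         emeasure (PiM {..<k} M) A * emeasure (M k) B"
proof -
  interpret product_prob_space M UNIV
    using prob_spaces by (rule product_prob_spaceI)
  define C where "C = {x \<in> space (PiM {..<Suc k} M). restrict x {..<k} \<in> A \<and> x k \<in> B}"
  have "C = ((\<lambda>x. restrict x {..<k}) -` A \<inter> space (PiM {..<Suc k} M)) \<inter>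
      ((\<lambda>x. x k) -` B \<inter> space (PiM {..<Suc k} M))"
    unfolding C_def by auto
  then have C_sets: "C \<in> sets (PiM {..<Suc k} M)"
    using measurable_sets[OF measurable_restrict_subset[of "{..<k}" "{..<Suc k}" M] A]
      measurable_sets[OF measurable_component_singleton[of k "{..<Suc k}" M] B]
    by auto
  have "prod_emb UNIV M {..<k} A \<inter> {\<omega>. \<omega> k \<in> B} = prod_emb UNIV M {..<Suc k} C"
    unfolding C_def by (auto simp: prod_emb_def space_PiM Int_absorb1)
  then have "emeasure (PiM UNIV M) (prod_emb UNIV M {..<k} A \<inter> {\<omega>. \<omega> k \<in> B}) =
      emeasure (PiM {..<Suc k} M) C"
    using C_sets by (simp add: emeasure_PiM_emb')
  also have "\<dots> = (\<integral>\<^sup>+ x. indicator C x \<partial>PiM {..<Suc k} M)"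
    using C_sets by simp
  also have "\<dots> = (\<integral>\<^sup>+ x. (\<integral>\<^sup>+ y. indicator C (x(k := y)) \<partial>M k) \<partial>PiM {..<k} M)"
    unfolding lessThan_Suc
    by (rule product_nn_integral_insert) (use C_sets in \<open>auto simp: lessThan_Suc\<close>)
  also have "\<dots> = (\<integral>\<^sup>+ x. emeasure (M k) B * indicator A x \<partial>PiM {..<k} M)"
  proof (rule nn_integral_cong)
    fix x
    assume x: "x \<in> space (PiM {..<k} M)"
    have "indicator C (x(k := y)) = (indicator A x * indicator B y :: ennreal)"
      if "y \<in> space (M k)" for y
    proof -
      have "x(k := y) \<in> space (PiM {..<Suc k} M)"
        using PiE_fun_upd[of y "\<lambda>i. space (M i)" k x "{..<k}"] x that
        by (simp add: space_PiM lessThan_Suc)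
      moreover have "restrict (x(k := y)) {..<k} = x"
        using x by (auto simp: space_PiM PiE_def extensional_def)
      ultimately show ?thesis
        unfolding C_def by (auto simp: indicator_def)
    qed
    then have "(\<integral>\<^sup>+ y. indicator C (x(k := y)) \<partial>M k) = (\<integral>\<^sup>+ y. indicator A x * indicator B y \<partial>M k)"
      by (rule nn_integral_cong)
    then show "(\<integral>\<^sup>+ y. indicator C (x(k := y)) \<partial>M k) = emeasure (M k) B * indicator A x"
      using B by (simp add: nn_integral_cmult_indicator) (simp add: mult.commute)
  qed
  also have "\<dots> = emeasure (PiM {..<k} M) A * emeasure (M k) B"
    using A by (simp add: nn_integral_cmult_indicator) (simp add: mult.commute)
  finally show ?thesis .
qed

lemma measure_PiM_prefix_event_Int_coordinate:
  fixes M :: "nat \<Rightarrow> 'a measure"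
  assumes prob_spaces: "\<And>i. prob_space (M i)"
    and A: "A \<in> sets (PiM UNIV M)"
    and prefix: "\<And>\<omega> \<omega>'. \<omega> \<in> space (PiM UNIV M) \<Longrightarrow> \<omega>' \<in> space (PiM UNIV M) \<Longrightarrow>
                   (\<forall>j<k. \<omega> j = \<omega>' j) \<Longrightarrow> \<omega> \<in> A \<Longrightarrow> \<omega>' \<in> A"
    and B: "B \<in> sets (M k)"
  shows "measure (PiM UNIV M) (A \<inter> {\<omega>. \<omega> k \<in> B}) = measure (PiM UNIV M) A * measure (M k) B"
proof -
  interpret product_prob_space M UNIV
    using prob_spaces by (rule product_prob_spaceI)
  obtain A' where A': "A' \<in> sets (PiM {..<k} M)" and A_eq: "A = prod_emb UNIV M {..<k} A'"
    by (rule prefix_event_eq_prod_emb[OF M.not_empty A prefix])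
  have "emeasure (PiM UNIV M) (A \<inter> {\<omega>. \<omega> k \<in> B}) = emeasure (PiM {..<k} M) A' * emeasure (M k) B"
    unfolding A_eq by (rule emeasure_prod_emb_Int_coordinate[OF prob_spaces A' B])
  also have "emeasure (PiM {..<k} M) A' = emeasure (PiM UNIV M) A"
    unfolding A_eq by (rule emeasure_PiM_emb'[symmetric]) (use A' in auto)
  finally show ?thesis
    by (simp add: measure_def enn2real_mult)
qed

section \<open>The uniform measure on the unit square\<close>

definition unit_square :: "(real \<times> real) measure" where
  "unit_square = uniform_measure lborel {0..1::real} \<Otimes>\<^sub>M uniform_measure lborel {0..1::real}"

lemma prob_space_unit_square: "prob_space unit_square"
  unfolding unit_square_def by (intro prob_space_pair prob_space_uniform_measure) auto

lemma space_unit_square [simp]: "space unit_square = UNIV"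
  unfolding unit_square_def by (simp add: space_pair_measure)

lemma sets_unit_square: "sets unit_square = sets (borel \<Otimes>\<^sub>M borel)"
  unfolding unit_square_def by (intro sets_pair_measure_cong) auto

lemma emeasure_unit_square_Times:
  assumes "A \<in> sets borel" "B \<in> sets borel"
  shows "emeasure unit_square (A \<times> B) = emeasure lborel ({0..1} \<inter> A) * emeasure lborel ({0..1} \<inter> B)"
proof -
  have "sigma_finite_measure (uniform_measure lborel {0..1::real})"
    by (intro prob_space_imp_sigma_finite prob_space_uniform_measure) auto
  then show ?thesis
    unfolding unit_square_def using assms
    by (simp add: sigma_finite_measure.emeasure_pair_measure_Times divide_ennreal_def Int_commute)
qed

lemma measure_unit_square_Times:
  assumes "A \<in> sets borel" "B \<in> sets borel"
  shows "measure unit_square (A \<times> B) = measure lborel ({0..1} \<inter> A) * measure lborel ({0..1} \<inter> B)"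
proof -
  have "emeasure lborel ({0..1} \<inter> X) \<noteq> \<infinity>" for X :: "real set"
    using emeasure_mono[of "{0..1} \<inter> X" "{0..1}" lborel] by (auto simp: top_unique)
  then show ?thesis
    using emeasure_unit_square_Times[OF assms] by (simp add: measure_def enn2real_mult)
qed

lemma measure_unit_square_Int_strip:
  assumes "S \<in> sets unit_square"
  shows "measure unit_square (S \<inter> UNIV \<times> {0..<1}) = measure unit_square S"
proof -
  interpret prob_space unit_square by (rule prob_space_unit_square)
  have "{0..1} \<inter> - {0..<1} = {1::real}" by auto
  then have "emeasure unit_square (UNIV \<times> - {0..<1}) = 0"
    by (simp add: emeasure_unit_square_Times)
  moreover have "UNIV \<times> - {0..<1} \<in> sets unit_square"
    unfolding sets_unit_square by (intro pair_measureI) auto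
  ultimately have "UNIV \<times> - {0..<1} \<in> null_sets unit_square"
    by (simp add: null_sets_def)
  moreover have "S - UNIV \<times> {0..<1} \<in> sets unit_square"
    using assms by (intro sets.Diff) (auto simp: sets_unit_square)
  ultimately have null: "S - UNIV \<times> {0..<1} \<in> null_sets unit_square"
    by (rule null_sets_subset) auto
  have "S = (S \<inter> UNIV \<times> {0..<1}) \<union> (S - UNIV \<times> {0..<1})" by auto
  then have "measure unit_square S =
      measure unit_square ((S \<inter> UNIV \<times> {0..<1}) \<union> (S - UNIV \<times> {0..<1}))"
    by simp
  also have "\<dots> = measure unit_square (S \<inter> UNIV \<times> {0..<1})"
    using assms null by (intro measure_Un_null_set) (auto simp: sets_unit_square)
  finally show ?thesis ..
qed

lemma coin_space_eq: "coin_space = PiM UNIV (\<lambda>_. unit_square)"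
  unfolding coin_space_def unit_square_def ..

lemma space_coin_space [simp]: "space coin_space = UNIV"
  unfolding coin_space_eq by (simp add: space_PiM)

lemma prob_space_coin_space: "prob_space coin_space"
  unfolding coin_space_eq by (rule prob_space_PiM) (rule prob_space_unit_square)

lemma coin_event_sets:
  assumes "B \<in> sets unit_square"
  shows "{\<omega>. \<omega> k \<in> B} \<in> sets coin_space"
proof -
  have "(\<lambda>\<omega>. \<omega> k) \<in> coin_space \<rightarrow>\<^sub>M unit_square"
    unfolding coin_space_eq by (rule measurable_component_singleton) simp
  from measurable_sets[OF this assms] show ?thesis
    by (simp add: vimage_def)
qed

section \<open>Runs of the algorithm\<close>

lemma ystep_heads:
  "fst xy < u / q ^ N \<Longrightarrow> ystep q u xy (N, Tab, c) =
     (let s = (LEAST s. 1 \<le> s \<and> snd xy < (\<Sum>t = 1..s. colprob q N Tab t))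
      in (N, Tab((clen Tab s + 1, s) := c + 1), c + 1))"
  by (simp add: ystep_def)

lemma ystep_tails: "\<not> fst xy < u / q ^ N \<Longrightarrow> ystep q u xy (N, Tab, c) = (Suc N, Tab, c)"
  by (simp add: ystep_def)

lemma yrun_prefix: "(\<And>j. j < k \<Longrightarrow> \<omega> j = \<omega>' j) \<Longrightarrow> yrun q u \<omega> k = yrun q u \<omega>' k"
  by (induction k) auto

lemma countable_range_yrun: "countable (range (\<lambda>\<omega>. yrun q u \<omega> k))"
proof (induction k)
  case 0
  then show ?case by simp
next
  case (Suc k)
  have step_countable: "countable (range (\<lambda>xy. ystep q u xy st))" for st
  proof -
    obtain N Tab c where st: "st = (N, Tab, c)" by (cases st)
    have "range (\<lambda>xy. ystep q u xy st) \<subseteq>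
        insert (Suc N, Tab, c) (range (\<lambda>s. (N, Tab((clen Tab s + 1, s) := c + 1), c + 1)))"
      unfolding st ystep_def by (auto simp: Let_def)
    then show ?thesis by (rule countable_subset) simp
  qed
  have "range (\<lambda>\<omega>. yrun q u \<omega> (Suc k)) \<subseteq>
      (\<Union>st\<in>range (\<lambda>\<omega>. yrun q u \<omega> k). range (\<lambda>xy. ystep q u xy st))"
    by auto
  moreover have "countable (\<Union>st\<in>range (\<lambda>\<omega>. yrun q u \<omega> k). range (\<lambda>xy. ystep q u xy st))"
    using Suc step_countable by (rule countable_UN)
  ultimately show ?case
    by (rule countable_subset)
qed

lemma measurable_yrun: "(\<lambda>\<omega>. yrun q u \<omega> k) \<in> coin_space \<rightarrow>\<^sub>M count_space UNIV"
proof (induction k)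
  case 0
  then show ?case by simp
next
  case (Suc k)
  let ?R = "range (\<lambda>\<omega>. yrun q u \<omega> k)"
  have yrun_k: "(\<lambda>\<omega>. yrun q u \<omega> k) \<in> coin_space \<rightarrow>\<^sub>M count_space ?R"
    unfolding measurable_count_space_eq_countable[OF countable_range_yrun]
    using measurable_sets[OF Suc] by auto
  have ystep_k: "(\<lambda>\<omega>. ystep q u (\<omega> k) st) \<in> coin_space \<rightarrow>\<^sub>M count_space UNIV" for st
  proof -
    obtain N Tab c where st: "st = (N, Tab, c)" by (cases st)
    have "(\<lambda>xy. ystep q u xy st) \<in> unit_square \<rightarrow>\<^sub>M count_space UNIV"
      unfolding st ystep_def unit_square_def by simp measurable
    then show ?thesis
      unfolding coin_space_eq by (rule measurable_compose[rotated]) simp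
  qed
  show ?case
    using measurable_compose_countable'[where f = "\<lambda>st \<omega>. ystep q u (\<omega> k) st",
        OF ystep_k yrun_k countable_range_yrun]
    by simp
qed

lemma yrun_event_sets: "{\<omega>. yrun q u \<omega> k = st} \<in> sets coin_space"
  using measurable_sets[OF measurable_yrun, of "{st}" q u k] by (simp add: vimage_def)

lemma prob_yrun_Int_coin:
  assumes "B \<in> sets unit_square"
  shows "measure coin_space ({\<omega>. yrun q u \<omega> k = st} \<inter> {\<omega>. \<omega> k \<in> B}) =
         measure coin_space {\<omega>. yrun q u \<omega> k = st} * measure unit_square B"
  unfolding coin_space_eq
proof (rule measure_PiM_prefix_event_Int_coordinate)
  show "{\<omega>. yrun q u \<omega> k = st} \<in> sets (PiM UNIV (\<lambda>_. unit_square))"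
    using yrun_event_sets unfolding coin_space_eq .
  show "\<omega>' \<in> {\<omega>. yrun q u \<omega> k = st}"
    if "\<forall>j<k. \<omega> j = \<omega>' j" "\<omega> \<in> {\<omega>. yrun q u \<omega> k = st}" for \<omega> \<omega>'
    using that yrun_prefix[of k \<omega> \<omega>' q u] by simp
qed (simp_all add: prob_space_unit_square assms)

definition wf_state :: "nat \<Rightarrow> ystate \<Rightarrow> bool" where
  "wf_state k st \<longleftrightarrow> (case st of (N, Tab, c) \<Rightarrow>
     1 \<le> N \<and> N + c = Suc k \<and> (\<forall>b. Tab b \<le> c) \<and> (0 < c \<longrightarrow> (\<exists>b. Tab b = c)) \<and>
     (\<forall>s. finite {i. Tab (i, s) \<noteq> 0}) \<and> (\<forall>i s. Tab (i, s) \<noteq> 0 \<longrightarrow> i \<le> clen Tab s))"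

lemma add_box_to_column:
  fixes Tab :: tab and s :: nat
  assumes fin: "\<forall>s. finite {i. Tab (i, s) \<noteq> 0}"
    and top_aligned: "\<forall>i s. Tab (i, s) \<noteq> 0 \<longrightarrow> i \<le> clen Tab s"
    and "v \<noteq> 0"
  defines "Tab' \<equiv> Tab((clen Tab s + 1, s) := v)"
  shows "Tab (clen Tab s + 1, s) = 0"
    and "clen Tab' s' = clen Tab s' + (if s' = s then 1 else 0)"
    and "\<forall>s. finite {i. Tab' (i, s) \<noteq> 0}"
    and "\<forall>i s. Tab' (i, s) \<noteq> 0 \<longrightarrow> i \<le> clen Tab' s"
proof -
  show empty: "Tab (clen Tab s + 1, s) = 0"
    using top_aligned by force
  have column: "{i. Tab' (i, s') \<noteq> 0} =
      (if s' = s then insert (clen Tab s + 1) {i. Tab (i, s') \<noteq> 0}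
       else {i. Tab (i, s') \<noteq> 0})" for s'
    unfolding Tab'_def using \<open>v \<noteq> 0\<close> by auto
  show clen': "clen Tab' s' = clen Tab s' + (if s' = s then 1 else 0)" for s'
    using empty fin unfolding clen_def column by auto
  show "\<forall>s. finite {i. Tab' (i, s) \<noteq> 0}"
    unfolding column using fin by auto
  show "\<forall>i s. Tab' (i, s) \<noteq> 0 \<longrightarrow> i \<le> clen Tab' s"
    using top_aligned unfolding clen' by (auto simp: Tab'_def le_Suc_eq)
qed

lemma wf_state_ystep: "wf_state k st \<Longrightarrow> wf_state (Suc k) (ystep q u xy st)"
proof -
  assume wf: "wf_state k st"
  obtain N Tab c where st: "st = (N, Tab, c)" by (cases st)
  show ?thesis
  proof (cases "fst xy < u / q ^ N")
    case True
    have "\<forall>s. finite {i. Tab (i, s) \<noteq> 0}" "\<forall>i s. Tab (i, s) \<noteq> 0 \<longrightarrow> i \<le> clen Tab s"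
      using wf unfolding st wf_state_def by auto
    note add_box = add_box_to_column(3,4)[OF this, of "c + 1"]
    show ?thesis
      using wf add_box unfolding st ystep_heads[OF True] wf_state_def
      by (auto simp: Let_def le_Suc_eq)
  next
    case False
    then show ?thesis using wf unfolding st ystep_tails[OF False] wf_state_def by auto
  qed
qed

lemma wf_state_yrun: "wf_state k (yrun q u \<omega> k)"
proof (induction k)
  case 0
  then show ?case by (simp add: wf_state_def clen_def)
next
  case (Suc k)
  then show ?case by (simp add: wf_state_ystep)
qed

section \<open>Standard Young tableaux\<close>

lemma nonzero_and_less_below:
  fixes f :: "nat \<Rightarrow> nat"
  assumes step: "\<And>i. f i \<noteq> 0 \<Longrightarrow> 1 < i \<Longrightarrow> f (i - 1) \<noteq> 0 \<and> f (i - 1) < f i"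
    and "f i \<noteq> 0" "1 \<le> i'" "i' < i"
  shows "f i' \<noteq> 0 \<and> f i' < f i"
  using assms(2-)
proof (induction i)
  case 0
  then show ?case by simp
next
  case (Suc i)
  have "f i \<noteq> 0 \<and> f i < f (Suc i)"
    using step[of "Suc i"] Suc.prems by simp
  then show ?case
    using Suc by (cases "i' = i") auto
qed

locale standard_tableau =
  fixes T :: tab and n :: nat
  assumes syt: "syt T n"
begin

lemma entry_pos: "T (i, j) \<noteq> 0 \<Longrightarrow> 1 \<le> i \<and> 1 \<le> j"
  using syt unfolding syt_def by blast

lemma bij_entries: "bij_betw T {b. T b \<noteq> 0} {1..n}"
  using syt unfolding syt_def by blast

lemma entry_le: "T b \<le> n"
  using bij_entries by (cases "T b = 0") (auto simp: bij_betw_def)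

lemma entry_inj: "T b = T b' \<Longrightarrow> T b \<noteq> 0 \<Longrightarrow> b = b'"
  using bij_entries by (metis (mono_tags) bij_betw_def inj_onD mem_Collect_eq)

lemma finite_boxes: "finite {b. T b \<noteq> 0}"
  using bij_betw_finite[OF bij_entries] by simp

lemma column_less:
  "T (i, j) \<noteq> 0 \<Longrightarrow> 1 \<le> i' \<Longrightarrow> i' < i \<Longrightarrow> T (i', j) \<noteq> 0 \<and> T (i', j) < T (i, j)"
proof (rule nonzero_and_less_below[where f = "\<lambda>i. T (i, j)"])
  show "T (i - 1, j) \<noteq> 0 \<and> T (i - 1, j) < T (i, j)" if "T (i, j) \<noteq> 0" "1 < i" for i
    using syt that unfolding syt_def by blast
qed

lemma row_less:
  "T (i, j) \<noteq> 0 \<Longrightarrow> 1 \<le> j' \<Longrightarrow> j' < j \<Longrightarrow> T (i, j') \<noteq> 0 \<and> T (i, j') < T (i, j)"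
proof (rule nonzero_and_less_below[where f = "\<lambda>j. T (i, j)"])
  show "T (i, j - 1) \<noteq> 0 \<and> T (i, j - 1) < T (i, j)" if "T (i, j) \<noteq> 0" "1 < j" for j
    using syt that unfolding syt_def by blast
qed

lemma corner_entry_le: "T b \<noteq> 0 \<Longrightarrow> T (1, 1) \<noteq> 0 \<and> T (1, 1) \<le> T b"
proof -
  assume "T b \<noteq> 0"
  moreover obtain i j where b: "b = (i, j)" by (cases b)
  ultimately have ij: "T (i, j) \<noteq> 0" "1 \<le> i" "1 \<le> j"
    using entry_pos by auto
  have "T (i, 1) \<noteq> 0 \<and> T (i, 1) \<le> T (i, j)"
    using row_less[OF ij(1), of 1] ij by (cases "j = 1") auto
  moreover have "T (1, 1) \<noteq> 0 \<and> T (1, 1) \<le> T (i, 1)" if "T (i, 1) \<noteq> 0"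
    using column_less[OF that, of 1] that ij by (cases "i = 1") auto
  ultimately show ?thesis
    unfolding b by force
qed

definition box_of :: "nat \<Rightarrow> nat \<times> nat" where
  "box_of c = (THE b. T b = c)"

definition row_of :: "nat \<Rightarrow> nat" where
  "row_of c = fst (box_of c)"

definition col_of :: "nat \<Rightarrow> nat" where
  "col_of c = snd (box_of c)"

lemma box_of_eq: "box_of c = (row_of c, col_of c)"
  by (simp add: row_of_def col_of_def)

lemma entry_box_of: "1 \<le> c \<Longrightarrow> c \<le> n \<Longrightarrow> T (box_of c) = c"
proof -
  assume c: "1 \<le> c" "c \<le> n"
  then have "c \<in> T ` {b. T b \<noteq> 0}"
    using bij_entries by (simp add: bij_betw_def)
  then obtain b where b: "T b = c"
    by blast
  have "box_of c = b"
    unfolding box_of_def by (rule the_equality) (use b c entry_inj in auto)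
  then show ?thesis using b by simp
qed

lemma box_of_unique: "T b = c \<Longrightarrow> c \<noteq> 0 \<Longrightarrow> b = box_of c"
  using entry_box_of[of c] entry_le[of b] entry_inj[of b "box_of c"] by simp

lemma entry_row_col: "1 \<le> c \<Longrightarrow> c \<le> n \<Longrightarrow> T (row_of c, col_of c) = c"
  using entry_box_of box_of_eq by metis

lemma row_col_pos: "1 \<le> c \<Longrightarrow> c \<le> n \<Longrightarrow> 1 \<le> row_of c \<and> 1 \<le> col_of c"
  using entry_row_col entry_pos by (metis not_one_le_zero)

definition tab_upto :: "nat \<Rightarrow> tab" where
  "tab_upto c = (\<lambda>b. if T b \<le> c then T b else 0)"

lemma tab_upto_0: "tab_upto 0 = (\<lambda>_. 0)"
  unfolding tab_upto_def by auto

lemma tab_upto_n: "tab_upto n = T"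
  unfolding tab_upto_def using entry_le by auto

lemma tab_upto_step:
  assumes c: "1 \<le> c" "c \<le> n"
  shows "tab_upto c = (tab_upto (c - 1))(box_of c := c)"
proof
  fix b
  show "tab_upto c b = ((tab_upto (c - 1))(box_of c := c)) b"
  proof (cases "b = box_of c")
    case True
    then show ?thesis using entry_box_of[OF c] by (simp add: tab_upto_def)
  next
    case False
    then have "T b \<noteq> c"
      using box_of_unique[of b c] c by auto
    then show ?thesis
      using False by (auto simp: tab_upto_def)
  qed
qed

lemma tab_upto_fun_upd_inverse:
  assumes c: "1 \<le> c" "c \<le> n" and "Tab p = 0" and upd: "Tab(p := c) = tab_upto c"
  shows "p = box_of c" and "Tab = tab_upto (c - 1)"
proof -
  have "tab_upto c p = c"
    using fun_cong[OF upd, of p] by simp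
  then have "T p = c"
    using c by (auto simp: tab_upto_def split: if_splits)
  then show p: "p = box_of c"
    using c by (intro box_of_unique) auto
  show "Tab = tab_upto (c - 1)"
  proof
    fix b
    show "Tab b = tab_upto (c - 1) b"
    proof (cases "b = p")
      case True
      then show ?thesis using \<open>Tab p = 0\<close> \<open>T p = c\<close> c by (simp add: tab_upto_def)
    next
      case False
      then show ?thesis
        using fun_cong[OF upd, of b] tab_upto_step[OF c] p by simp
    qed
  qed
qed

lemma dlen_shape: "dlen (shape T c) s = clen (tab_upto c) s"
  unfolding dlen_def clen_def shape_def tab_upto_def
  by (rule arg_cong[where f = card]) auto

lemma finite_column_tab_upto: "finite {i. tab_upto c (i, s) \<noteq> 0}"
proof -
  have "{i. tab_upto c (i, s) \<noteq> 0} \<subseteq> fst ` {b. T b \<noteq> 0}"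
    by (force simp: tab_upto_def split: if_splits)
  then show ?thesis
    using finite_boxes finite_subset by blast
qed

lemma clen_tab_upto_col_of:
  assumes c: "1 \<le> c" "c \<le> n"
  shows "clen (tab_upto (c - 1)) (col_of c) = row_of c - 1"
proof -
  have above: "tab_upto (c - 1) (i, col_of c) \<noteq> 0 \<longleftrightarrow> 1 \<le> i \<and> i < row_of c" for i
  proof
    assume "tab_upto (c - 1) (i, col_of c) \<noteq> 0"
    then have i: "T (i, col_of c) \<noteq> 0" "T (i, col_of c) < c"
      using c by (auto simp: tab_upto_def split: if_splits)
    have "\<not> row_of c < i"
    proof
      assume "row_of c < i"
      then have "T (row_of c, col_of c) < T (i, col_of c)"
        using column_less[OF i(1)] row_col_pos[OF c] by blast
      then show False
        using i(2) entry_row_col[OF c] by simp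
    qed
    moreover have "i \<noteq> row_of c"
      using i(2) entry_row_col[OF c] by auto
    ultimately show "1 \<le> i \<and> i < row_of c"
      using entry_pos[OF i(1)] by simp
  next
    assume "1 \<le> i \<and> i < row_of c"
    then have "T (i, col_of c) \<noteq> 0 \<and> T (i, col_of c) < c"
      using column_less[of "row_of c" "col_of c" i] entry_row_col[OF c] c by simp
    then show "tab_upto (c - 1) (i, col_of c) \<noteq> 0"
      by (auto simp: tab_upto_def)
  qed
  then have "{i. tab_upto (c - 1) (i, col_of c) \<noteq> 0} = {1..<row_of c}"
    by (intro set_eqI) (simp only: mem_Collect_eq atLeastLessThan_iff above)
  then show ?thesis
    unfolding clen_def by simp
qed

lemma clen_tab_upto_step:
  assumes c: "1 \<le> c" "c \<le> n"
  shows "clen (tab_upto c) s = clen (tab_upto (c - 1)) s + (if s = col_of c then 1 else 0)"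
proof -
  have "{i. tab_upto c (i, s) \<noteq> 0} =
      (if s = col_of c then insert (row_of c) else id) {i. tab_upto (c - 1) (i, s) \<noteq> 0}"
    using c unfolding tab_upto_step[OF c] box_of_eq by auto
  moreover have "tab_upto (c - 1) (row_of c, col_of c) = 0"
    using entry_row_col[OF c] c by (auto simp: tab_upto_def)
  ultimately show ?thesis
    using finite_column_tab_upto unfolding clen_def by auto
qed

lemma clen_tab_upto_antimono: "1 \<le> s \<Longrightarrow> clen (tab_upto c) (Suc s) \<le> clen (tab_upto c) s"
proof -
  assume "1 \<le> s"
  have "tab_upto c (i, s) \<noteq> 0" if "tab_upto c (i, Suc s) \<noteq> 0" for i
  proof -
    have "T (i, Suc s) \<noteq> 0" "T (i, Suc s) \<le> c"
      using that by (auto simp: tab_upto_def split: if_splits)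
    then show ?thesis
      using row_less[of i "Suc s" s] \<open>1 \<le> s\<close> by (auto simp: tab_upto_def)
  qed
  then have "{i. tab_upto c (i, Suc s) \<noteq> 0} \<subseteq> {i. tab_upto c (i, s) \<noteq> 0}"
    by blast
  then show ?thesis
    unfolding clen_def using finite_column_tab_upto by (rule card_mono[rotated])
qed

lemma clen_tab_upto_first_pos: "1 \<le> c \<Longrightarrow> c \<le> n \<Longrightarrow> 1 \<le> clen (tab_upto c) 1"
proof -
  assume c: "1 \<le> c" "c \<le> n"
  then have "1 \<in> {i. tab_upto c (i, 1) \<noteq> 0}"
    using corner_entry_le[of "box_of c"] entry_box_of[OF c] by (auto simp: tab_upto_def)
  then have "{i. tab_upto c (i, 1) \<noteq> 0} \<noteq> {}"
    by blast
  then show ?thesis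
    unfolding clen_def using finite_column_tab_upto by (simp add: Suc_le_eq card_gt_0_iff)
qed

lemma clen_tab_upto_eventually_0: "\<exists>S. \<forall>s\<ge>S. clen (tab_upto c) s = 0"
proof
  let ?S = "Suc (Max (snd ` {b. T b \<noteq> 0}))"
  show "\<forall>s\<ge>?S. clen (tab_upto c) s = 0"
  proof (intro allI impI)
    fix s assume "?S \<le> s"
    have "s \<notin> snd ` {b. T b \<noteq> 0}"
    proof
      assume "s \<in> snd ` {b. T b \<noteq> 0}"
      then have "s \<le> Max (snd ` {b. T b \<noteq> 0})"
        using finite_boxes by (intro Max_ge) auto
      then show False
        using \<open>?S \<le> s\<close> by simp
    qed
    then have "T (i, s) = 0" for i
      by force
    then show "clen (tab_upto c) s = 0"
      by (simp add: clen_def tab_upto_def)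
  qed
qed

lemma edge_wt_shape:
  assumes c: "1 \<le> c" "c \<le> n"
  defines "P \<equiv> tab_upto (c - 1)"
  shows "edge_wt q u (shape T (c - 1)) (shape T c) =
    (if col_of c = 1 then u / (q ^ clen P 1 * (q ^ (clen P 1 + 1) - 1))
     else u * (1 / q ^ clen P (col_of c) - 1 / q ^ clen P (col_of c - 1)) / (q ^ clen P 1 - 1))"
proof -
  have "(THE s. 1 \<le> s \<and> dlen (shape T c) s \<noteq> dlen (shape T (c - 1)) s) = col_of c"
    by (rule the_equality)
      (use clen_tab_upto_step[OF c] row_col_pos[OF c] in \<open>auto simp: dlen_shape split: if_splits\<close>)
  then show ?thesis
    unfolding edge_wt_def Let_def dlen_shape P_def by simp
qed

end

section \<open>Probabilities of the states of a run\<close>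

lemma Least_threshold_eq_iff:
  fixes g :: "nat \<Rightarrow> real"
  assumes mono: "mono g" and below: "g 0 \<le> y" and above: "y < g S"
  shows "(LEAST s. 1 \<le> s \<and> y < g s) = s\<^sub>0 \<longleftrightarrow> 1 \<le> s\<^sub>0 \<and> g (s\<^sub>0 - 1) \<le> y \<and> y < g s\<^sub>0"
proof -
  define L where "L = (LEAST s. 1 \<le> s \<and> y < g s)"
  have "1 \<le> Suc S \<and> y < g (Suc S)"
    using above monoD[OF mono, of S "Suc S"] by simp
  then have L: "1 \<le> L \<and> y < g L"
    unfolding L_def by (rule LeastI)
  have below_L: "g (L - 1) \<le> y"
  proof (cases "L = 1")
    case True
    then show ?thesis using below by simp
  next
    case False
    then have "1 \<le> L - 1"
      using L by linarith
    moreover have "\<not> (1 \<le> L - 1 \<and> y < g (L - 1))"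
      using False L unfolding L_def by (intro not_less_Least) auto
    ultimately show ?thesis by simp
  qed
  show ?thesis
  proof
    assume "(LEAST s. 1 \<le> s \<and> y < g s) = s\<^sub>0"
    then show "1 \<le> s\<^sub>0 \<and> g (s\<^sub>0 - 1) \<le> y \<and> y < g s\<^sub>0"
      using L below_L unfolding L_def by auto
  next
    assume s\<^sub>0: "1 \<le> s\<^sub>0 \<and> g (s\<^sub>0 - 1) \<le> y \<and> y < g s\<^sub>0"
    then have "L \<le> s\<^sub>0"
      unfolding L_def by (intro Least_le) simp
    moreover have "\<not> L < s\<^sub>0"
    proof
      assume "L < s\<^sub>0"
      then have "g L \<le> g (s\<^sub>0 - 1)"
        by (intro monoD[OF mono]) simp
      then show False
        using s\<^sub>0 L by simp
    qed
    ultimately show "(LEAST s. 1 \<le> s \<and> y < g s) = s\<^sub>0"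
      unfolding L_def by simp
  qed
qed

lemma prod_one_minus_power_shift:
  fixes q :: "'a::field"
  assumes "q \<noteq> 0"
  shows "(\<Prod>i<a. 1 - q ^ i / q ^ Suc m) * (1 - q ^ a / q ^ Suc m) =
         (1 - 1 / q ^ Suc m) * (\<Prod>i<a. 1 - q ^ i / q ^ m)"
proof -
  have "(\<Prod>i<a. 1 - q ^ i / q ^ Suc m) * (1 - q ^ a / q ^ Suc m) = (\<Prod>i<Suc a. 1 - q ^ i / q ^ Suc m)"
    by simp
  also have "\<dots> = (1 - 1 / q ^ Suc m) * (\<Prod>i<a. 1 - q ^ Suc i / q ^ Suc m)"
    by (subst prod.lessThan_Suc_shift) simp
  finally show ?thesis
    using assms by simp
qed

definition column_cdf :: "real \<Rightarrow> nat \<Rightarrow> tab \<Rightarrow> nat \<Rightarrow> real" where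
  "column_cdf q N Tab s = (if s = 0 then 0 else (q ^ N / q ^ clen Tab s - 1) / (q ^ N - 1))"

lemma sum_colprob: "(\<Sum>t = 1..s. colprob q N Tab t) = column_cdf q N Tab s"
proof (induction s)
  case 0
  then show ?case by (simp add: column_cdf_def)
next
  case (Suc s)
  then show ?case
    by (cases "s = 0") (simp_all add: column_cdf_def colprob_def diff_divide_distrib)
qed

lemma colprob_eq_diff:
  "1 \<le> s \<Longrightarrow> colprob q N Tab s = column_cdf q N Tab s - column_cdf q N Tab (s - 1)"
  using sum_colprob[of q N Tab s] sum_colprob[of q N Tab "s - 1"]
  by (cases s) simp_all

lemma mono_column_cdf:
  fixes q :: real
  assumes q: "q > 1" and N: "1 \<le> N" and first: "clen Tab 1 \<le> N"
    and antimono: "\<And>s. 1 \<le> s \<Longrightarrow> clen Tab (Suc s) \<le> clen Tab s"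
  shows "mono (column_cdf q N Tab)"
  unfolding mono_iff_le_Suc
proof
  fix s
  have denom: "q ^ N - 1 > 0"
    using q N by (simp add: one_less_power)
  show "column_cdf q N Tab s \<le> column_cdf q N Tab (Suc s)"
  proof (cases "s = 0")
    case True
    have "q ^ clen Tab 1 \<le> q ^ N"
      using q first by (simp add: power_increasing)
    then show ?thesis
      using True denom q by (simp add: column_cdf_def le_divide_eq)
  next
    case False
    have "q ^ clen Tab (Suc s) \<le> q ^ clen Tab s"
      using q antimono False by (simp add: power_increasing)
    then have "q ^ N / q ^ clen Tab s \<le> q ^ N / q ^ clen Tab (Suc s)"
      using q by (simp add: frac_le)
    then show ?thesis
      using False denom by (simp add: column_cdf_def divide_right_mono)
  qed
qed

lemma column_cdf_le_1:
  fixes q :: real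
  assumes "q > 1" "1 \<le> N"
  shows "column_cdf q N Tab s \<le> 1"
proof -
  have "q ^ N / q ^ clen Tab s \<le> q ^ N"
    using assms by (simp add: divide_le_eq one_le_power mult_le_cancel_left1)
  moreover have "q ^ N - 1 > 0"
    using assms by (simp add: one_less_power)
  ultimately show ?thesis
    by (simp add: column_cdf_def divide_le_eq)
qed

lemma column_cdf_empty_column:
  fixes q :: real
  assumes "q > 1" "1 \<le> N" "1 \<le> s" "clen Tab s = 0"
  shows "column_cdf q N Tab s = 1"
proof -
  have "q ^ N \<noteq> 1"
    using assms by (simp add: one_less_power less_imp_neq[symmetric])
  then show ?thesis
    using assms by (simp add: column_cdf_def)
qed

locale young_tableau_algorithm = standard_tableau +
  fixes q u :: real
  assumes q_gt_1: "q > 1" and u_pos: "0 < u" and u_less_1: "u < 1"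
begin

definition state :: "nat \<Rightarrow> nat \<Rightarrow> ystate" where
  "state M c = (M, tab_upto c, c)"

definition tails :: "nat \<Rightarrow> (real \<times> real) set" where
  "tails M = {xy. u / q ^ M \<le> fst xy}"

definition heads_into :: "nat \<Rightarrow> nat \<Rightarrow> (real \<times> real) set" where
  "heads_into M c = {xy. fst xy < u / q ^ M \<and>
     (LEAST s. 1 \<le> s \<and> snd xy < (\<Sum>t = 1..s. colprob q M (tab_upto (c - 1)) t)) = col_of c}"

definition column_prob :: "nat \<Rightarrow> nat \<Rightarrow> real" where
  "column_prob M c = colprob q M (tab_upto (c - 1)) (col_of c)"

lemma heads_threshold_nonneg: "0 \<le> u / q ^ M"
  using u_pos q_gt_1 by simp

lemma heads_threshold_le_1: "u / q ^ M \<le> 1"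
proof -
  have "1 \<le> q ^ M"
    using q_gt_1 by (simp add: one_le_power)
  then show ?thesis
    using u_pos u_less_1 by (simp add: divide_le_eq)
qed

lemma tails_sets: "tails M \<in> sets unit_square"
proof -
  have "tails M = {u / q ^ M..} \<times> UNIV"
    unfolding tails_def by auto
  then show ?thesis
    unfolding sets_unit_square by simp
qed

lemma measure_tails: "measure unit_square (tails M) = 1 - u / q ^ M"
proof -
  have "tails M = {u / q ^ M..} \<times> UNIV"
    unfolding tails_def by auto
  then show ?thesis
    using measure_unit_square_Times[of "{u / q ^ M..}" UNIV] heads_threshold_le_1[of M]
      max_absorb2[OF heads_threshold_nonneg[of M]]
    by simp
qed

lemma heads_into_sets: "heads_into M c \<in> sets unit_square"
proof -
  have "{xy \<in> space (borel \<Otimes>\<^sub>M borel). fst xy < u / q ^ M \<and>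
      (LEAST s. 1 \<le> s \<and> snd xy < (\<Sum>t = 1..s. colprob q M (tab_upto (c - 1)) t)) = col_of c}
    \<in> sets (borel \<Otimes>\<^sub>M borel)"
    by measurable
  then show ?thesis
    unfolding sets_unit_square heads_into_def by (simp add: space_pair_measure)
qed

lemma heads_into_Int_strip:
  assumes M: "1 \<le> M" and c: "1 \<le> c" "c \<le> n" and first: "clen (tab_upto (c - 1)) 1 \<le> M"
  defines "F \<equiv> column_cdf q M (tab_upto (c - 1))"
  shows "heads_into M c \<inter> UNIV \<times> {0..<1} = {..<u / q ^ M} \<times> {F (col_of c - 1)..<F (col_of c)}"
proof -
  define s\<^sub>0 where "s\<^sub>0 = col_of c"
  have mono: "mono F"
    unfolding F_def using q_gt_1 M first clen_tab_upto_antimono by (rule mono_column_cdf)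
  have F_0: "F 0 = 0"
    by (simp add: F_def column_cdf_def)
  obtain S where S: "\<forall>s\<ge>S. clen (tab_upto (c - 1)) s = 0"
    using clen_tab_upto_eventually_0 by blast
  have F_S: "F (Suc S) = 1"
    unfolding F_def using q_gt_1 M S by (intro column_cdf_empty_column) auto
  have s\<^sub>0: "1 \<le> s\<^sub>0"
    unfolding s\<^sub>0_def using row_col_pos[OF c] by simp
  have pointwise: "(x, y) \<in> heads_into M c \<inter> UNIV \<times> {0..<1} \<longleftrightarrow>
      (x, y) \<in> {..<u / q ^ M} \<times> {F (s\<^sub>0 - 1)..<F s\<^sub>0}" for x y
  proof -
    have "0 \<le> y \<and> y < 1 \<longleftrightarrow>
        0 \<le> y \<and> y < 1 \<and> ((LEAST s. 1 \<le> s \<and> y < F s) = s\<^sub>0 \<longleftrightarrow> F (s\<^sub>0 - 1) \<le> y \<and> y < F s\<^sub>0)"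
      using Least_threshold_eq_iff[OF mono, of y "Suc S" s\<^sub>0] F_0 F_S s\<^sub>0 by auto
    moreover have "F (s\<^sub>0 - 1) \<le> y \<Longrightarrow> y < F s\<^sub>0 \<Longrightarrow> 0 \<le> y \<and> y < 1"
      using monoD[OF mono, of 0 "s\<^sub>0 - 1"] F_0
        column_cdf_le_1[OF q_gt_1 M, of "tab_upto (c - 1)" s\<^sub>0]
      unfolding F_def by auto
    ultimately show ?thesis
      unfolding heads_into_def sum_colprob F_def[symmetric] s\<^sub>0_def[symmetric] by auto
  qed
  show ?thesis
    unfolding s\<^sub>0_def[symmetric]
  proof (intro set_eqI)
    show "xy \<in> heads_into M c \<inter> UNIV \<times> {0..<1} \<longleftrightarrow> xy \<in> {..<u / q ^ M} \<times> {F (s\<^sub>0 - 1)..<F s\<^sub>0}" for xy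
      using pointwise[of "fst xy" "snd xy"] by simp
  qed
qed

lemma measure_heads_into:
  assumes M: "1 \<le> M" and c: "1 \<le> c" "c \<le> n" and first: "clen (tab_upto (c - 1)) 1 \<le> M"
  shows "measure unit_square (heads_into M c) = u / q ^ M * column_prob M c"
proof -
  define F where "F = column_cdf q M (tab_upto (c - 1))"
  define s\<^sub>0 where "s\<^sub>0 = col_of c"
  have s\<^sub>0: "1 \<le> s\<^sub>0"
    unfolding s\<^sub>0_def using row_col_pos[OF c] by simp
  have mono: "mono F"
    unfolding F_def using q_gt_1 M first clen_tab_upto_antimono by (rule mono_column_cdf)
  have F_bounds: "0 \<le> F (s\<^sub>0 - 1)" "F s\<^sub>0 \<le> 1" "F (s\<^sub>0 - 1) \<le> F s\<^sub>0"
    using monoD[OF mono, of 0 "s\<^sub>0 - 1"] monoD[OF mono, of "s\<^sub>0 - 1" s\<^sub>0]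
      column_cdf_le_1[OF q_gt_1 M]
    unfolding F_def by (auto simp: column_cdf_def)
  then have Ico: "{0..1} \<inter> {..<u / q ^ M} = {0..<u / q ^ M}"
      "{0..1} \<inter> {F (s\<^sub>0 - 1)..<F s\<^sub>0} = {F (s\<^sub>0 - 1)..<F s\<^sub>0}"
    using heads_threshold_le_1[of M] by auto
  have "measure unit_square (heads_into M c) =
      measure unit_square ({..<u / q ^ M} \<times> {F (s\<^sub>0 - 1)..<F s\<^sub>0})"
    using measure_unit_square_Int_strip[OF heads_into_sets, of M c]
    unfolding heads_into_Int_strip[OF assms] F_def s\<^sub>0_def by simp
  also have "\<dots> = u / q ^ M * (F s\<^sub>0 - F (s\<^sub>0 - 1))"
    using measure_unit_square_Times[of "{..<u / q ^ M}" "{F (s\<^sub>0 - 1)..<F s\<^sub>0}"] F_bounds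
      heads_threshold_nonneg[of M]
    unfolding Ico by simp
  also have "F s\<^sub>0 - F (s\<^sub>0 - 1) = column_prob M c"
    unfolding F_def s\<^sub>0_def column_prob_def using s\<^sub>0 s\<^sub>0_def by (simp add: colprob_eq_diff)
  finally show ?thesis .
qed

definition tails_prob :: "nat \<Rightarrow> real" where
  "tails_prob K = (\<Prod>i<K. 1 - u / q ^ Suc i)"

definition chain_weight :: "nat \<Rightarrow> real" where
  "chain_weight c = (\<Prod>i<c. edge_wt q u (shape T i) (shape T (Suc i)))"

definition first_column_factor :: "nat \<Rightarrow> nat \<Rightarrow> real" where
  "first_column_factor c M = (\<Prod>i<clen (tab_upto c) 1. 1 - q ^ i / q ^ M)"

definition state_prob :: "nat \<Rightarrow> nat \<Rightarrow> real" where
  "state_prob M c = tails_prob (M - 1) * chain_weight c * first_column_factor c M"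

lemma first_column_factor_vanishes: "M < clen (tab_upto c) 1 \<Longrightarrow> first_column_factor c M = 0"
  unfolding first_column_factor_def using q_gt_1
  by (subst prod_zero_iff) (auto intro!: bexI[of _ M])

lemma first_column_factor_0: "1 \<le> c \<Longrightarrow> c \<le> n \<Longrightarrow> first_column_factor c 0 = 0"
  using first_column_factor_vanishes[of 0 c] clen_tab_upto_first_pos[of c] by simp

lemma state_prob_0: "1 \<le> c \<Longrightarrow> c \<le> n \<Longrightarrow> state_prob 0 c = 0"
  using first_column_factor_0 by (simp add: state_prob_def)

lemma state_prob_1_0: "state_prob 1 0 = 1"
  by (simp add: state_prob_def tails_prob_def chain_weight_def first_column_factor_def
      tab_upto_0 clen_def)

lemma first_column_factor_pred:
  assumes M: "1 \<le> M"
  shows "first_column_factor c (M - 1) =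
           first_column_factor c M * (q ^ M - q ^ clen (tab_upto c) 1) / (q ^ M - 1)"
proof -
  have M_Suc: "Suc (M - 1) = M"
    using M by simp
  have "(\<Prod>i<clen (tab_upto c) 1. 1 - q ^ i / q ^ Suc (M - 1)) *
      (1 - q ^ clen (tab_upto c) 1 / q ^ Suc (M - 1)) =
      (1 - 1 / q ^ Suc (M - 1)) * (\<Prod>i<clen (tab_upto c) 1. 1 - q ^ i / q ^ (M - 1))"
    using q_gt_1 by (intro prod_one_minus_power_shift) simp
  then have shift: "first_column_factor c M * (1 - q ^ clen (tab_upto c) 1 / q ^ M) =
      (1 - 1 / q ^ M) * first_column_factor c (M - 1)"
    unfolding first_column_factor_def M_Suc .
  have "q ^ M > 1"
    using q_gt_1 M by (simp add: one_less_power)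
  then have "q ^ M \<noteq> 0" "q ^ M - 1 \<noteq> 0"
    by linarith+
  have "first_column_factor c M * (q ^ M - q ^ clen (tab_upto c) 1) =
      q ^ M * (first_column_factor c M * (1 - q ^ clen (tab_upto c) 1 / q ^ M))"
    using \<open>q ^ M \<noteq> 0\<close> by (simp add: field_simps)
  also have "\<dots> = (q ^ M - 1) * first_column_factor c (M - 1)"
    unfolding shift using \<open>q ^ M \<noteq> 0\<close> by (simp add: field_simps)
  finally show ?thesis
    using \<open>q ^ M - 1 \<noteq> 0\<close> by (simp add: field_simps)
qed

lemma first_column_factor_add_box:
  assumes c: "1 \<le> c" "c \<le> n"
  shows "first_column_factor c M = first_column_factor (c - 1) M *
           (if col_of c = 1 then 1 - q ^ clen (tab_upto (c - 1)) 1 / q ^ M else 1)"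
  unfolding first_column_factor_def clen_tab_upto_step[OF c] by simp

lemma edge_wt_factor_diff_first_column:
  assumes M: "1 \<le> M" and c: "1 \<le> c" "c \<le> n" and col: "col_of c = 1"
  shows "edge_wt q u (shape T (c - 1)) (shape T c) *
           (first_column_factor c M - first_column_factor c (M - 1)) =
         first_column_factor (c - 1) M * (u / q ^ M * column_prob M c)"
proof -
  define x where "x = q ^ M"
  define z where "z = q ^ clen (tab_upto (c - 1)) 1"
  define A where "A = first_column_factor (c - 1) M"
  have x: "x > 1"
    unfolding x_def using q_gt_1 M by (simp add: one_less_power)
  have z: "z \<ge> 1"
    unfolding z_def using q_gt_1 by (simp add: one_le_power)
  have "q ^ M = q * q ^ (M - 1)"
    using M by (metis Suc_diff_1 less_le_trans not_le zero_less_one power_Suc)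
  then have "z / q ^ (M - 1) = q * z / x"
    unfolding x_def using q_gt_1 by simp
  then have factor_M: "first_column_factor c M = A * (1 - z / x)"
    and factor_M_1: "first_column_factor c (M - 1) = A * (x - z) / (x - 1) * (1 - q * z / x)"
    using first_column_factor_add_box[OF c] first_column_factor_pred[OF M, of "c - 1"] col
    unfolding A_def x_def z_def by simp_all
  have "x \<noteq> 0" "x - 1 \<noteq> 0"
    using x by auto
  then have diff: "first_column_factor c M - first_column_factor c (M - 1) =
      A * (x - z) * (q * z - 1) / (x * (x - 1))"
    unfolding factor_M factor_M_1 by (simp add: field_simps)
  have "q * z - 1 \<noteq> 0"
    using q_gt_1 z by (smt (verit) mult_le_cancel_left1)
  then have "u / (z * (q * z - 1)) * (A * (x - z) * (q * z - 1) / (x * (x - 1))) =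
      u * A * (x - z) / (z * x * (x - 1))"
    by simp
  also have "\<dots> = A * (u / x * ((x / z - 1) / (x - 1)))"
    using x z by (simp add: field_simps)
  finally show ?thesis
    using edge_wt_shape[OF c] col
    unfolding diff column_prob_def colprob_def A_def x_def z_def by simp
qed

lemma edge_wt_factor_diff_other_column:
  assumes M: "1 \<le> M" and c: "1 \<le> c" "c \<le> n" and col: "col_of c \<noteq> 1"
  shows "edge_wt q u (shape T (c - 1)) (shape T c) *
           (first_column_factor c M - first_column_factor c (M - 1)) =
         first_column_factor (c - 1) M * (u / q ^ M * column_prob M c)"
proof -
  define x where "x = q ^ M"
  define z where "z = q ^ clen (tab_upto (c - 1)) 1"
  define A where "A = first_column_factor (c - 1) M"
  define D where
    "D = 1 / q ^ clen (tab_upto (c - 1)) (col_of c) - 1 / q ^ clen (tab_upto (c - 1)) (col_of c - 1)"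
  have x: "x > 1"
    unfolding x_def using q_gt_1 M by (simp add: one_less_power)
  have "2 \<le> c"
    using col c row_less[of "row_of c" "col_of c" 1] entry_row_col[OF c] row_col_pos[OF c] by auto
  then have "1 \<le> clen (tab_upto (c - 1)) 1"
    using clen_tab_upto_first_pos[of "c - 1"] c by simp
  then have z: "z > 1"
    using q_gt_1 unfolding z_def by (simp add: one_less_power)
  have "first_column_factor c M - first_column_factor c (M - 1) = A - A * (x - z) / (x - 1)"
    using first_column_factor_add_box[OF c] first_column_factor_pred[OF M, of "c - 1"] col
    unfolding A_def x_def z_def by simp
  also have "\<dots> = A * (z - 1) / (x - 1)"
    using x by (simp add: field_simps)
  finally have "u * D / (z - 1) * (first_column_factor c M - first_column_factor c (M - 1)) =
      A * (u / x * (x * D / (x - 1)))"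
    using x z by simp
  then show ?thesis
    using edge_wt_shape[OF c] col
    unfolding column_prob_def colprob_def D_def A_def x_def z_def by (simp add: right_diff_distrib)
qed

lemma state_prob_rec:
  assumes M: "1 \<le> M" and c: "c \<le> n" and start: "2 \<le> M + c"
  shows "state_prob M c = state_prob (M - 1) c * (1 - u / q ^ (M - 1)) +
           (if c = 0 then 0 else state_prob M (c - 1) * (u / q ^ M * column_prob M c))"
proof -
  have first_term: "state_prob (M - 1) c * (1 - u / q ^ (M - 1)) =
      tails_prob (M - 1) * chain_weight c * first_column_factor c (M - 1)"
  proof (cases "M = 1")
    case True
    then have "1 \<le> c"
      using start by simp
    then show ?thesis
      using True c state_prob_0 first_column_factor_0 by simp
  next
    case False
    define K where "K = M - 2"
    have K: "M = Suc (Suc K)"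
      using M False by (simp add: K_def)
    show ?thesis
      unfolding K state_prob_def tails_prob_def by simp
  qed
  show ?thesis
  proof (cases "c = 0")
    case True
    then show ?thesis
      unfolding first_term by (simp add: state_prob_def first_column_factor_def tab_upto_0 clen_def)
  next
    case False
    then have c1: "1 \<le> c"
      by simp
    have "chain_weight c = chain_weight (c - 1) * edge_wt q u (shape T (c - 1)) (shape T c)"
      using c1 by (cases c) (simp_all add: chain_weight_def)
    then have "state_prob M c -
        tails_prob (M - 1) * chain_weight c * first_column_factor c (M - 1) =
        tails_prob (M - 1) * chain_weight (c - 1) *
        (edge_wt q u (shape T (c - 1)) (shape T c) *
          (first_column_factor c M - first_column_factor c (M - 1)))"
      unfolding state_prob_def by (simp add: algebra_simps)
    also have "\<dots> = state_prob M (c - 1) * (u / q ^ M * column_prob M c)"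
      using edge_wt_factor_diff_first_column[OF M c1 c]
        edge_wt_factor_diff_other_column[OF M c1 c]
      by (cases "col_of c = 1") (simp_all add: state_prob_def)
    finally show ?thesis
      unfolding first_term using False by simp
  qed
qed

lemma state_prob_times_heads:
  assumes "1 \<le> M" "1 \<le> c" "c \<le> n"
  shows "state_prob M (c - 1) * measure unit_square (heads_into M c) =
         state_prob M (c - 1) * (u / q ^ M * column_prob M c)"
proof (cases "clen (tab_upto (c - 1)) 1 \<le> M")
  case True
  then show ?thesis
    using measure_heads_into assms by simp
next
  case False
  \<comment> \<open>The colprob values need not form a distribution here,
    but the state has probability 0.\<close>
  then show ?thesis
    using first_column_factor_vanishes by (simp add: state_prob_def)
qed

lemma ystep_eq_state_heads:
  assumes wf: "wf_state k (N, Tab, c')" and heads: "fst xy < u / q ^ N" and c: "c \<le> n"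
  shows "ystep q u xy (N, Tab, c') = state M c \<longleftrightarrow>
         1 \<le> c \<and> (N, Tab, c') = state M (c - 1) \<and> xy \<in> heads_into M c"
proof -
  define s where "s = (LEAST s. 1 \<le> s \<and> snd xy < (\<Sum>t = 1..s. colprob q N Tab t))"
  define p where "p = (clen Tab s + 1, s)"
  have step: "ystep q u xy (N, Tab, c') = (N, Tab(p := c' + 1), c' + 1)"
    unfolding ystep_heads[OF heads] s_def p_def by (simp add: Let_def)
  have "\<forall>s. finite {i. Tab (i, s) \<noteq> 0}" "\<forall>i s. Tab (i, s) \<noteq> 0 \<longrightarrow> i \<le> clen Tab s"
    using wf unfolding wf_state_def by auto
  then have empty: "Tab p = 0"
    unfolding p_def using add_box_to_column(1)[of Tab 1] by simp
  show ?thesis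
  proof
    assume "ystep q u xy (N, Tab, c') = state M c"
    then have N: "N = M" and c': "c = Suc c'" and upd: "Tab(p := c) = tab_upto c"
      unfolding step state_def by auto
    have c1: "1 \<le> c"
      using c' by simp
    have "p = box_of c" and Tab: "Tab = tab_upto (c - 1)"
      using tab_upto_fun_upd_inverse[OF c1 c empty upd] by auto
    then have "s = col_of c"
      unfolding p_def box_of_eq by simp
    then show "1 \<le> c \<and> (N, Tab, c') = state M (c - 1) \<and> xy \<in> heads_into M c"
      using heads c1 unfolding N Tab c' state_def heads_into_def s_def by simp
  next
    assume "1 \<le> c \<and> (N, Tab, c') = state M (c - 1) \<and> xy \<in> heads_into M c"
    then have c1: "1 \<le> c" and N: "N = M" and Tab: "Tab = tab_upto (c - 1)" and c': "c' = c - 1"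
      and "s = col_of c"
      unfolding state_def heads_into_def s_def by auto
    then have "p = box_of c"
      unfolding p_def box_of_eq using clen_tab_upto_col_of[OF c1 c] row_col_pos[OF c1 c] by simp
    then show "ystep q u xy (N, Tab, c') = state M c"
      unfolding step unfolding state_def N Tab c' using tab_upto_step[OF c1 c] c1 by simp
  qed
qed

lemma ystep_eq_state_iff:
  assumes wf: "wf_state k st" and M: "1 \<le> M" and c: "c \<le> n"
  shows "ystep q u xy st = state M c \<longleftrightarrow>
    (st = state (M - 1) c \<and> xy \<in> tails (M - 1)) \<or>
    (1 \<le> c \<and> st = state M (c - 1) \<and> xy \<in> heads_into M c)"
proof -
  obtain N Tab c' where st: "st = (N, Tab, c')"
    by (cases st)
  show ?thesis
  proof (cases "fst xy < u / q ^ N")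
    case True
    then have "st \<noteq> state (M - 1) c \<or> xy \<notin> tails (M - 1)"
      unfolding st state_def tails_def by auto
    then show ?thesis
      using ystep_eq_state_heads[OF wf[unfolded st] True c] unfolding st by blast
  next
    case False
    then have "st \<noteq> state M (c - 1) \<or> xy \<notin> heads_into M c"
      unfolding st state_def heads_into_def by auto
    then show ?thesis
      using False M unfolding st ystep_tails[OF False] state_def tails_def by auto
  qed
qed

lemma yrun_Suc_eq_state:
  assumes "1 \<le> M" "c \<le> n"
  shows "{\<omega>. yrun q u \<omega> (Suc k) = state M c} =
    ({\<omega>. yrun q u \<omega> k = state (M - 1) c} \<inter> {\<omega>. \<omega> k \<in> tails (M - 1)}) \<union>
    (if c = 0 then {} else {\<omega>. yrun q u \<omega> k = state M (c - 1)} \<inter> {\<omega>. \<omega> k \<in> heads_into M c})"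
  using ystep_eq_state_iff[OF wf_state_yrun assms] by auto

lemma prob_yrun_state_0: "measure coin_space {\<omega>. yrun q u \<omega> k = state 0 c} = 0"
proof -
  have "yrun q u \<omega> k \<noteq> state 0 c" for \<omega>
    using wf_state_yrun[of k q u \<omega>] by (auto simp: state_def wf_state_def)
  then show ?thesis
    by simp
qed

lemma prob_yrun_Suc_state:
  assumes M: "1 \<le> M" and c: "c \<le> n"
  shows "measure coin_space {\<omega>. yrun q u \<omega> (Suc k) = state M c} =
    measure coin_space {\<omega>. yrun q u \<omega> k = state (M - 1) c} * (1 - u / q ^ (M - 1)) +
    (if c = 0 then 0
     else measure coin_space {\<omega>. yrun q u \<omega> k = state M (c - 1)} *
          measure unit_square (heads_into M c))"
proof -
  interpret prob_space coin_space
    by (rule prob_space_coin_space)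
  let ?tails = "{\<omega>. yrun q u \<omega> k = state (M - 1) c} \<inter> {\<omega>. \<omega> k \<in> tails (M - 1)}"
  let ?heads = "{\<omega>. yrun q u \<omega> k = state M (c - 1)} \<inter> {\<omega>. \<omega> k \<in> heads_into M c}"
  have "prob (?tails \<union> ?heads) = prob ?tails + prob ?heads"
    by (intro finite_measure_Union sets.Int yrun_event_sets coin_event_sets
        tails_sets heads_into_sets)
      (use M in \<open>auto simp: state_def\<close>)
  then show ?thesis
    unfolding yrun_Suc_eq_state[OF M c]
    using prob_yrun_Int_coin[OF tails_sets] prob_yrun_Int_coin[OF heads_into_sets] measure_tails
    by simp
qed

lemma prob_yrun_state:
  "M + c = Suc k \<Longrightarrow> c \<le> n \<Longrightarrow> measure coin_space {\<omega>. yrun q u \<omega> k = state M c} = state_prob M c"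
proof (induction k arbitrary: M c)
  case 0
  then consider "M = 1" "c = 0" | "M = 0" "c = 1"
    by linarith
  then show ?case
  proof cases
    case 1
    interpret prob_space coin_space
      by (rule prob_space_coin_space)
    have "{\<omega>. yrun q u \<omega> 0 = state 1 0} = space coin_space"
      by (simp add: state_def tab_upto_0)
    then show ?thesis
      using 1 state_prob_1_0 prob_space by simp
  next
    case 2
    then show ?thesis
      unfolding 2 prob_yrun_state_0 using state_prob_0[of 1] 0 2 by simp
  qed
next
  case (Suc k)
  show ?case
  proof (cases "M = 0")
    case True
    then show ?thesis
      unfolding True prob_yrun_state_0 using state_prob_0[of c] Suc.prems True by simp
  next
    case False
    then have M: "1 \<le> M"
      by simp
    have heads: "measure coin_space {\<omega>. yrun q u \<omega> k = state M (c - 1)} *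
        measure unit_square (heads_into M c) =
        state_prob M (c - 1) * (u / q ^ M * column_prob M c)" if "c \<noteq> 0"
      using Suc.IH[of M "c - 1"] Suc.prems that M state_prob_times_heads[of M c] by simp
    have start: "2 \<le> M + c"
      using Suc.prems by simp
    show ?thesis
      unfolding prob_yrun_Suc_state[OF M Suc.prems(2)] state_prob_rec[OF M Suc.prems(2) start]
      using Suc.IH[of "M - 1" c] Suc.prems M heads by simp
  qed
qed

definition settled_until :: "nat \<Rightarrow> nat \<Rightarrow> (nat \<Rightarrow> real \<times> real) set" where
  "settled_until m J = (\<Inter>j\<le>J. {\<omega>. yrun q u \<omega> (m + n + j) = state (Suc (m + j)) n})"

definition settled :: "nat \<Rightarrow> (nat \<Rightarrow> real \<times> real) set" where
  "settled m = (\<Inter>j. {\<omega>. yrun q u \<omega> (m + n + j) = state (Suc (m + j)) n})"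

lemma settled_until_sets: "settled_until m J \<in> sets coin_space"
  unfolding settled_until_def by (intro sets.countable_INT) (auto intro: yrun_event_sets)

lemma settled_sets: "settled m \<in> sets coin_space"
  unfolding settled_def by (intro sets.countable_INT) (auto intro: yrun_event_sets)

lemma settled_until_Suc:
  "settled_until m (Suc J) = settled_until m J \<inter> {\<omega>. \<omega> (m + n + J) \<in> tails (Suc (m + J))}"
proof -
  have "yrun q u \<omega> (Suc (m + n + J)) = state (Suc (Suc (m + J))) n \<longleftrightarrow>
      \<omega> (m + n + J) \<in> tails (Suc (m + J))"
    if "yrun q u \<omega> (m + n + J) = state (Suc (m + J)) n" for \<omega>
    using ystep_eq_state_iff[OF wf_state_yrun[of "m + n + J" q u \<omega>],
        where M = "Suc (Suc (m + J))" and c = n and xy = "\<omega> (m + n + J)"] that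
    by (auto simp: state_def)
  then show ?thesis
    unfolding settled_until_def by (auto simp: atMost_Suc add.assoc)
qed

lemma prob_settled_until:
  "measure coin_space (settled_until m J) =
     chain_weight n * first_column_factor n (Suc m) * tails_prob (m + J)"
proof (induction J)
  case 0
  have "settled_until m 0 = {\<omega>. yrun q u \<omega> (m + n) = state (Suc m) n}"
    unfolding settled_until_def by simp
  then show ?case
    using prob_yrun_state[of "Suc m" n "m + n"] by (simp add: state_prob_def)
next
  case (Suc J)
  have "measure coin_space (settled_until m (Suc J)) =
      measure coin_space (settled_until m J) * measure unit_square (tails (Suc (m + J)))"
    unfolding settled_until_Suc coin_space_eq
  proof (rule measure_PiM_prefix_event_Int_coordinate)
    show "settled_until m J \<in> sets (PiM UNIV (\<lambda>_. unit_square))"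
      using settled_until_sets unfolding coin_space_eq .
    show "\<omega>' \<in> settled_until m J" if "\<forall>j<m + n + J. \<omega> j = \<omega>' j" "\<omega> \<in> settled_until m J" for \<omega> \<omega>'
      using that yrun_prefix[of "m + n + _" \<omega> \<omega>'] unfolding settled_until_def by auto
  qed (simp_all add: prob_space_unit_square tails_sets)
  then show ?case
    unfolding Suc.IH measure_tails by (simp add: tails_prob_def)
qed

lemma tails_prob_tendsto: "tails_prob \<longlonglongrightarrow> prodinf (\<lambda>r. 1 - u / q ^ Suc r)"
proof -
  have "summable (\<lambda>r. u / q * (1 / q) ^ r)"
    using q_gt_1 by (intro summable_mult summable_geometric) auto
  moreover have "norm ((1 - u / q ^ Suc r) - 1) = u / q * (1 / q) ^ r" for r
    using u_pos q_gt_1 by (simp add: power_divide)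
  ultimately have "convergent_prod (\<lambda>r. 1 - u / q ^ Suc r)"
    by (intro abs_convergent_prod_imp_convergent_prod summable_imp_abs_convergent_prod) simp
  then have "(\<lambda>K. tails_prob (Suc K)) \<longlonglongrightarrow> prodinf (\<lambda>r. 1 - u / q ^ Suc r)"
    unfolding tails_prob_def lessThan_Suc_atMost by (rule convergent_prod_LIMSEQ)
  then show ?thesis
    by (rule LIMSEQ_imp_Suc)
qed

lemma prob_settled:
  "measure coin_space (settled m) =
     chain_weight n * first_column_factor n (Suc m) * prodinf (\<lambda>r. 1 - u / q ^ Suc r)"
proof -
  interpret prob_space coin_space
    by (rule prob_space_coin_space)
  have "settled m = (\<Inter>J. settled_until m J)"
    unfolding settled_def settled_until_def by auto
  moreover have "(\<lambda>J. prob (settled_until m J)) \<longlonglongrightarrow> prob (\<Inter>J. settled_until m J)"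
    using settled_until_sets
    by (intro finite_Lim_measure_decseq) (auto simp: decseq_def settled_until_def)
  moreover have "(\<lambda>J. prob (settled_until m J)) \<longlonglongrightarrow>
      chain_weight n * first_column_factor n (Suc m) * prodinf (\<lambda>r. 1 - u / q ^ Suc r)"
    unfolding prob_settled_until
    using LIMSEQ_ignore_initial_segment[OF tails_prob_tendsto, of m]
    by (intro tendsto_mult_left) (simp add: add.commute)
  ultimately show ?thesis
    using LIMSEQ_unique by metis
qed

lemma first_column_factor_tendsto: "(\<lambda>M. first_column_factor c M) \<longlonglongrightarrow> 1"
proof -
  have "(\<lambda>M. q ^ i / q ^ M) \<longlonglongrightarrow> 0" for i
  proof -
    have "(\<lambda>M. q ^ i * (1 / q) ^ M) \<longlonglongrightarrow> q ^ i * 0"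
      using q_gt_1 by (intro tendsto_mult tendsto_const LIMSEQ_power_zero) auto
    then show ?thesis
      by (simp add: power_divide)
  qed
  then have "(\<lambda>M. \<Prod>i<clen (tab_upto c) 1. 1 - q ^ i / q ^ M) \<longlonglongrightarrow> (\<Prod>i<clen (tab_upto c) 1. 1 - 0)"
    by (intro tendsto_prod tendsto_diff tendsto_const)
  then show ?thesis
    unfolding first_column_factor_def by simp
qed

lemma yrun_eq_T_imp_state:
  assumes "fst (snd (yrun q u \<omega> k)) = T"
  shows "yrun q u \<omega> k = state (Suc k - n) n"
proof -
  obtain N c where run: "yrun q u \<omega> k = (N, T, c)"
    using assms by (cases "yrun q u \<omega> k") auto
  have wf: "N + c = Suc k" "\<forall>b. T b \<le> c" "0 < c \<longrightarrow> (\<exists>b. T b = c)"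
    using wf_state_yrun[of k q u \<omega>] unfolding run wf_state_def by auto
  have "c = n"
  proof (cases "n = 0")
    case True
    then show ?thesis
      using wf(3) entry_le by (metis le_zero_eq not_gr_zero)
  next
    case False
    then have "n \<le> c"
      using wf(2) entry_box_of[of n] by (metis One_nat_def Suc_leI not_gr_zero order_refl)
    moreover obtain b where "T b = c"
      using wf(3) calculation False by auto
    then have "c \<le> n"
      using entry_le[of b] by simp
    ultimately show ?thesis
      by simp
  qed
  then show ?thesis
    unfolding run state_def using wf(1) tab_upto_n by simp
qed

lemma outputs_eq_Union_settled: "outputs q u T = (\<Union>m. settled m)"
proof (intro set_eqI iffI)
  fix \<omega>
  assume "\<omega> \<in> outputs q u T"
  then obtain K where K: "\<forall>k\<ge>K. fst (snd (yrun q u \<omega> k)) = T"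
    unfolding outputs_def by auto
  have "yrun q u \<omega> (K + n + j) = state (Suc (K + j)) n" for j
    using yrun_eq_T_imp_state[of \<omega> "K + n + j"] K by simp
  then show "\<omega> \<in> (\<Union>m. settled m)"
    unfolding settled_def by blast
next
  fix \<omega>
  assume "\<omega> \<in> (\<Union>m. settled m)"
  then obtain m where m: "\<forall>j. yrun q u \<omega> (m + n + j) = state (Suc (m + j)) n"
    unfolding settled_def by auto
  have "fst (snd (yrun q u \<omega> k)) = T" if "m + n \<le> k" for k
    using m[rule_format, of "k - (m + n)"] that by (simp add: state_def tab_upto_n)
  then show "\<omega> \<in> outputs q u T"
    unfolding outputs_def by auto
qed

lemma incseq_settled: "incseq settled"
proof (rule incseq_SucI)
  show "settled m \<subseteq> settled (Suc m)" for m
  proof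
    fix \<omega>
    assume "\<omega> \<in> settled m"
    then have "yrun q u \<omega> (m + n + Suc j) = state (Suc (m + Suc j)) n" for j
      unfolding settled_def by blast
    then show "\<omega> \<in> settled (Suc m)"
      unfolding settled_def by simp
  qed
qed

theorem prob_outputs:
  "measure coin_space (outputs q u T) = prodinf (\<lambda>r. 1 - u / q ^ Suc r) * chain_weight n"
proof -
  interpret prob_space coin_space
    by (rule prob_space_coin_space)
  have "(\<lambda>m. prob (settled m)) \<longlonglongrightarrow> prob (\<Union>m. settled m)"
    using settled_sets incseq_settled by (intro finite_Lim_measure_incseq) auto
  moreover have "(\<lambda>m. prob (settled m)) \<longlonglongrightarrow> chain_weight n * 1 * prodinf (\<lambda>r. 1 - u / q ^ Suc r)"
    unfolding prob_settled using LIMSEQ_Suc[OF first_column_factor_tendsto]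
    by (intro tendsto_intros)
  ultimately show ?thesis
    unfolding outputs_eq_Union_settled using LIMSEQ_unique by (simp add: mult.commute)
qed

end

theorem corollary4:
  fixes q u :: real and T :: tab and n :: nat
  assumes "q > 1" and "0 < u" and "u < 1" and "syt T n"
  shows "measure coin_space (outputs q u T) =
           prodinf (\<lambda>r. 1 - u / q ^ Suc r) *
           (\<Prod>i<n. edge_wt q u (shape T i) (shape T (Suc i)))"
proof -
  interpret young_tableau_algorithm T n q u
    using assms by unfold_locales auto
  show ?thesis
    using prob_outputs unfolding chain_weight_def .
qed

end
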